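(* Consider the network SIS system $\dot x = (-D+B-XB)x$ on $\Xi_n$, where $B$ is irreducible, and suppose $\phi:=s(-D+B)>0$. Let $y\in\mathbb{R}^n$, $y>0$ (entrywise), satisfy $(-D+B)y=\phi y$ with $\max_i y_i=1$. For $\epsilon\in(0,1)$ define $\mathcal{M}_\epsilon=\{x\in\mathbb{R}^n:\ \epsilon y_i\le x_i\le 1\ \forall i\}$, with faces $P_i=\{x: x_i=\epsilon y_i,\ x_j\in[\epsilon y_j,1]\ \forall j\ne i\}$ and $Q_i=\{x: x_i=1,\ x_j\in[\epsilon y_j,1]\ \forall j\ne i\}$. Then there exists $\epsilon>0$ sufficiently small such that: (i) both $\mathcal{M}_\epsilon$ and its interior are positively invariant for the system; (ii) for each $i=1,\dots,n$, $-\dot x_i<0$ for all $x\in P_i$ and $\dot x_i<0$ for all $x\in Q_i$; (iii) for every $x(0)\in\partial\Xi_n\setminus\{0_n\}$ there is a finite $\bar\kappa>0$ with $x(\bar\kappa)\in\mathcal{M}_\epsilon$; and (iv) every equilibrium $x\in\Xi_n\setminus\{0_n\}$ of the system satisfies $x\in\operatorname{int}(\mathcal{M}_\epsilon)$.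
   Context: Network SIS model: $n\ge2$, $D=\operatorname{diag}(d_1,\dots,d_n)$ with $d_i>0$, $B=(b_{ij})\in\mathbb{R}^{n\times n}$ entrywise nonnegative, $X=\operatorname{diag}(x_1,\dots,x_n)$; componentwise $\dot x_i=-d_ix_i+(1-x_i)\sum_j b_{ij}x_j$. $B$ irreducible is equivalent to the associated directed graph (edge from $j$ to $i$ iff $b_{ij}\neq 0$) being strongly connected. $\Xi_n=\{x\in\mathbb{R}^n: 0\le x_i\le 1\ \forall i\}$; $\partial\Xi_n$ is its boundary. For a square matrix $M$, $s(M)$ is the largest real part of its eigenvalues. Vector inequalities are entrywise. *)

theory Defs
  imports "HOL-Analysis.Analysis"
begin

definition diag_mat :: "real^'n \<Rightarrow> real^'n^'n" where
  "diag_mat d = (\<chi> i j. if i = j then d $ i else 0)"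

definition eigenvalues_c :: "real^'n^'n \<Rightarrow> complex set" where
  "eigenvalues_c M = {z. det ((\<chi> i j. complex_of_real (M $ i $ j) - (if i = j then z else 0))
                              :: complex^'n^'n) = 0}"

definition spectral_abscissa :: "real^'n^'n \<Rightarrow> real" where
  "spectral_abscissa M = Max (Re ` eigenvalues_c M)"

text \<open>Irreducibility: the directed graph with an edge j -> i iff b_ij \<noteq> 0 is strongly connected.\<close>
definition irreducible_mat :: "real^'n^'n \<Rightarrow> bool" where
  "irreducible_mat B \<longleftrightarrow> (\<forall>i j. (j, i) \<in> {(a, b). B $ b $ a \<noteq> 0}\<^sup>*)"

definition sis_field :: "real^'n \<Rightarrow> real^'n^'n \<Rightarrow> real^'n \<Rightarrow> real^'n" where
  "sis_field d B x = (\<chi> i. - d $ i * x $ i + (1 - x $ i) * (\<Sum>j\<in>UNIV. B $ i $ j * x $ j))"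

definition sis_solution :: "real^'n \<Rightarrow> real^'n^'n \<Rightarrow> (real \<Rightarrow> real^'n) \<Rightarrow> bool" where
  "sis_solution d B x \<longleftrightarrow>
     (\<forall>t\<ge>0. (x has_vector_derivative sis_field d B (x t)) (at t within {0..}))"

definition pos_invariant :: "real^'n \<Rightarrow> real^'n^'n \<Rightarrow> (real^'n) set \<Rightarrow> bool" where
  "pos_invariant d B S \<longleftrightarrow>
     (\<forall>x. sis_solution d B x \<longrightarrow> x 0 \<in> S \<longrightarrow> (\<forall>t\<ge>0. x t \<in> S))"

definition Xi :: "(real^'n) set" where
  "Xi = {x. \<forall>i. 0 \<le> x $ i \<and> x $ i \<le> 1}"

definition M_eps :: "real \<Rightarrow> real^'n \<Rightarrow> (real^'n) set" where
  "M_eps \<epsilon> y = {x. \<forall>i. \<epsilon> * y $ i \<le> x $ i \<and> x $ i \<le> 1}"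

definition P_face :: "real \<Rightarrow> real^'n \<Rightarrow> 'n \<Rightarrow> (real^'n) set" where
  "P_face \<epsilon> y i = {x. x $ i = \<epsilon> * y $ i \<and> (\<forall>j. j \<noteq> i \<longrightarrow> \<epsilon> * y $ j \<le> x $ j \<and> x $ j \<le> 1)}"

definition Q_face :: "real \<Rightarrow> real^'n \<Rightarrow> 'n \<Rightarrow> (real^'n) set" where
  "Q_face \<epsilon> y i = {x. x $ i = 1 \<and> (\<forall>j. j \<noteq> i \<longrightarrow> \<epsilon> * y $ j \<le> x $ j \<and> x $ j \<le> 1)}"

end

theory Submission
  imports Defs
begin

text \<open>All invariance statements come from one barrier principle: a solution can leave a box only
  through a face at a first exit time, and it cannot do so where the field points strictly inward.
  On the lower face x_i = \<epsilon> y_i the Perron eigenvector y gives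
  x_i' \<ge> \<epsilon> y_i (\<phi> - \<epsilon> y_i (\<phi> + d_i)) > 0 for small \<epsilon>, and on the upper face x_i = 1 the field
  is -d_i < 0. Irreducibility makes every nonzero trajectory in the cube positive in all
  coordinates after a finite time, because a healthy node with an infected in-neighbour is
  infected at once; letting the lower face then grow like exp(\<phi> t / 4) drives the trajectory into
  M_\<epsilon>. The same face estimates push every nonzero equilibrium into the interior of M_\<epsilon>.\<close>

lemma positivity_barrier:
  fixes g g' :: "'k::finite \<Rightarrow> real \<Rightarrow> real"
  assumes start: "\<And>k. 0 < g k a"
    and deriv: "\<And>k s. a < s \<Longrightarrow> s \<le> b \<Longrightarrow> (g k has_real_derivative g' k s) (at s)"
    and cont: "\<And>k. continuous_on {a..b} (g k)"
    and crossing: "\<And>k s. a < s \<Longrightarrow> s \<le> b \<Longrightarrow> (\<forall>j. 0 \<le> g j s) \<Longrightarrow> g k s = 0 \<Longrightarrow> 0 < g' k s"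
    and t: "a \<le> t" "t \<le> b"
  shows "0 < g k t"
proof (rule ccontr)
  assume "\<not> 0 < g k t"
  define S where "S = (\<Union>k. {a..b} \<inter> g k -` {..0})"
  have "t \<in> S" using \<open>\<not> 0 < g k t\<close> t unfolding S_def by (auto intro!: exI[of _ k])
  moreover have bdd: "bdd_below S" unfolding S_def by (rule bdd_belowI[of _ a]) auto
  moreover have "closed S" unfolding S_def
    by (intro closed_Union) (auto intro!: continuous_closed_preimage cont)
  ultimately have "Inf S \<in> S" by (intro closed_contains_Inf) auto
  define s where "s = Inf S"
  obtain k0 where k0: "g k0 s \<le> 0" and s: "a \<le> s" "s \<le> b"
    using \<open>Inf S \<in> S\<close> unfolding S_def s_def by auto
  have before: "0 < g j r" if "a \<le> r" "r < s" for j r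
  proof (rule ccontr)
    assume "\<not> 0 < g j r"
    with that s have "r \<in> S" unfolding S_def by (auto intro!: exI[of _ j])
    then have "s \<le> r" unfolding s_def using bdd by (rule cInf_lower)
    with that show False by simp
  qed
  have "a < s" using start[of k0] k0 s by (cases "s = a") auto
  \<comment> \<open>at the first exit time no coordinate can already be negative, by the intermediate value theorem\<close>
  have nonneg: "0 \<le> g j s" for j
  proof (rule ccontr)
    assume "\<not> 0 \<le> g j s"
    moreover have "continuous_on {a..s} (g j)" using s by (intro continuous_on_subset[OF cont[of j]]) auto
    ultimately obtain r where "a \<le> r" "r \<le> s" "g j r = 0"
      using IVT2'[of "g j" s 0 a] start[of j] s by auto
    with before[of r j] \<open>\<not> 0 \<le> g j s\<close> show False by (cases "r = s") auto
  qed
  then have "g k0 s = 0" using k0 by (simp add: order_antisym)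
  with crossing[OF \<open>a < s\<close> s(2)] nonneg have "0 < g' k0 s" by blast
  from DERIV_pos_inc_left[OF deriv[OF \<open>a < s\<close> s(2)] this] obtain h where
    h: "0 < h" "\<And>r. 0 < r \<Longrightarrow> r < h \<Longrightarrow> g k0 (s - r) < g k0 s" by blast
  define r where "r = min (h/2) ((s - a)/2)"
  have "0 < r" "r < h" "a \<le> s - r" "s - r < s"
    using h(1) \<open>a < s\<close> unfolding r_def by (auto simp: min_def field_simps)
  with h(2)[of r] before[of "s - r" k0] \<open>g k0 s = 0\<close> show False by auto
qed

lemma has_vector_derivative_vec_nth:
  "(x has_vector_derivative x') F \<Longrightarrow> ((\<lambda>s. x s $ i) has_real_derivative x' $ i) F"
  using bounded_linear.has_vector_derivative[OF bounded_linear_vec_nth]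
  by (simp add: has_real_derivative_iff_has_vector_derivative)

lemma stays_in_moving_box:
  fixes x :: "real \<Rightarrow> real^'n" and l u :: "'n \<Rightarrow> real \<Rightarrow> real"
  assumes x_deriv: "\<And>s. a < s \<Longrightarrow> s \<le> b \<Longrightarrow> (x has_vector_derivative x' s) (at s)"
    and x_cont: "continuous_on {a..b} x"
    and l_deriv: "\<And>i s. (l i has_real_derivative l' i s) (at s)"
    and u_deriv: "\<And>i s. (u i has_real_derivative u' i s) (at s)"
    and start: "\<And>i. l i a < x a $ i \<and> x a $ i < u i a"
    and lower: "\<And>i s. a < s \<Longrightarrow> s \<le> b \<Longrightarrow> (\<forall>j. l j s \<le> x s $ j \<and> x s $ j \<le> u j s) \<Longrightarrow>
                  x s $ i = l i s \<Longrightarrow> l' i s < x' s $ i"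
    and upper: "\<And>i s. a < s \<Longrightarrow> s \<le> b \<Longrightarrow> (\<forall>j. l j s \<le> x s $ j \<and> x s $ j \<le> u j s) \<Longrightarrow>
                  x s $ i = u i s \<Longrightarrow> x' s $ i < u' i s"
    and t: "a \<le> t" "t \<le> b"
  shows "l i t < x t $ i \<and> x t $ i < u i t"
proof -
  define g :: "bool \<times> 'n \<Rightarrow> real \<Rightarrow> real" where
    "g k s = (if fst k then x s $ snd k - l (snd k) s else u (snd k) s - x s $ snd k)" for k s
  define g' :: "bool \<times> 'n \<Rightarrow> real \<Rightarrow> real" where
    "g' k s = (if fst k then x' s $ snd k - l' (snd k) s else u' (snd k) s - x' s $ snd k)" for k s
  have "0 < g k t" for k
  proof (rule positivity_barrier[where g=g and g'=g' and a=a and b=b])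
    show "0 < g k a" for k using start by (simp add: g_def)
    show "(g k has_real_derivative g' k s) (at s)" if "a < s" "s \<le> b" for k s
    proof -
      have "((\<lambda>s. x s $ snd k) has_real_derivative x' s $ snd k) (at s)"
        using x_deriv[OF that] by (rule has_vector_derivative_vec_nth)
      then show ?thesis unfolding g_def[abs_def] g'_def
        by (cases "fst k") (auto intro!: derivative_eq_intros l_deriv u_deriv)
    qed
    have "continuous_on {a..b} (l i)" "continuous_on {a..b} (u i)" for i
      using DERIV_isCont[OF l_deriv] DERIV_isCont[OF u_deriv]
      by (auto intro: continuous_at_imp_continuous_on)
    then show "continuous_on {a..b} (g k)" for k
      unfolding g_def[abs_def] using x_cont by (cases "fst k") (auto intro!: continuous_intros)
    show "0 < g' k s" if "a < s" "s \<le> b" "\<forall>j. 0 \<le> g j s" "g k s = 0" for k s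
    proof -
      have "\<forall>j. l j s \<le> x s $ j \<and> x s $ j \<le> u j s"
        using spec[OF that(3), of "(True, _)"] spec[OF that(3), of "(False, _)"] by (simp add: g_def)
      with that lower upper show ?thesis by (cases "fst k") (auto simp: g_def g'_def)
    qed
  qed (use t in auto)
  from this[of "(True, i)"] this[of "(False, i)"] show ?thesis by (simp add: g_def)
qed

lemma sis_field_nth:
  "sis_field d B x $ i = - d $ i * x $ i + (1 - x $ i) * (\<Sum>j\<in>UNIV. B $ i $ j * x $ j)"
  by (simp add: sis_field_def)

lemma sis_solution_has_vector_derivative:
  assumes "sis_solution d B x" "0 < t"
  shows "(x has_vector_derivative sis_field d B (x t)) (at t)"
proof -
  have "at t within {0..} = at t" by (rule at_within_interior) (use assms(2) in simp)
  with assms show ?thesis unfolding sis_solution_def by (metis less_imp_le)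
qed

lemma sis_solution_continuous_on: "sis_solution d B x \<Longrightarrow> continuous_on {0..} x"
  unfolding continuous_on_eq_continuous_within sis_solution_def
  by (auto intro: has_vector_derivative_continuous)

lemma sis_solution_stays_in_moving_box:
  fixes l u :: "'n::finite \<Rightarrow> real \<Rightarrow> real"
  assumes sol: "sis_solution d B x" and "0 \<le> a" "a \<le> t"
    and l_deriv: "\<And>i s. (l i has_real_derivative l' i s) (at s)"
    and u_deriv: "\<And>i s. (u i has_real_derivative u' i s) (at s)"
    and start: "\<And>i. l i a < x a $ i \<and> x a $ i < u i a"
    and lower: "\<And>i s. a < s \<Longrightarrow> s \<le> t \<Longrightarrow> (\<forall>j. l j s \<le> x s $ j \<and> x s $ j \<le> u j s) \<Longrightarrow>
                  x s $ i = l i s \<Longrightarrow> l' i s < sis_field d B (x s) $ i"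
    and upper: "\<And>i s. a < s \<Longrightarrow> s \<le> t \<Longrightarrow> (\<forall>j. l j s \<le> x s $ j \<and> x s $ j \<le> u j s) \<Longrightarrow>
                  x s $ i = u i s \<Longrightarrow> sis_field d B (x s) $ i < u' i s"
  shows "l i t < x t $ i \<and> x t $ i < u i t"
proof (rule stays_in_moving_box[where x = x and x' = "\<lambda>s. sis_field d B (x s)" and a = a and b = t,
       OF _ _ l_deriv u_deriv start lower upper])
  show "(x has_vector_derivative sis_field d B (x s)) (at s)" if "a < s" for s
    using sis_solution_has_vector_derivative[OF sol] that \<open>0 \<le> a\<close> by simp
  show "continuous_on {a..t} x"
    using \<open>0 \<le> a\<close> by (intro continuous_on_subset[OF sis_solution_continuous_on[OF sol]]) auto
qed (use \<open>a \<le> t\<close> in auto)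

lemma irreducible_mat_edge_out:
  assumes "irreducible_mat B" "j \<in> P" "i \<notin> P"
  obtains a b where "a \<in> P" "b \<notin> P" "B $ b $ a \<noteq> 0"
proof -
  have "(j, i) \<in> {(a, b). B $ b $ a \<noteq> 0}\<^sup>*"
    using assms(1) unfolding irreducible_mat_def by blast
  then have "(\<exists>a\<in>P. \<exists>b. b \<notin> P \<and> B $ b $ a \<noteq> 0) \<or> i \<in> P"
    using assms(2) by (induction rule: rtrancl_induct) auto
  with assms(3) that show ?thesis by blast
qed

lemma eigenvector_row_sum:
  assumes "(B - diag_mat d) *v y = \<phi> *\<^sub>R y"
  shows "(\<Sum>j\<in>UNIV. B $ i $ j * y $ j) = (\<phi> + d $ i) * y $ i"
proof -
  have "((B - diag_mat d) *v y) $ i = (\<Sum>j\<in>UNIV. B $ i $ j * y $ j) - d $ i * y $ i"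
    by (simp add: matrix_vector_mult_def diag_mat_def left_diff_distrib sum_subtractf
        if_distrib[of "\<lambda>a. a * _"] cong: if_cong)
  with assms show ?thesis by (simp add: algebra_simps)
qed

locale sis =
  fixes d :: "real^'n" and B :: "real^'n^'n"
  assumes d_pos: "\<And>i. 0 < d $ i"
    and B_nonneg: "\<And>i j. 0 \<le> B $ i $ j"
begin

lemma field_nth_neg_at_upper:
  assumes "1 \<le> x $ i" "\<forall>j. 0 \<le> x $ j"
  shows "sis_field d B x $ i < 0"
proof -
  have "0 \<le> (\<Sum>j\<in>UNIV. B $ i $ j * x $ j)" using assms(2) B_nonneg by (simp add: sum_nonneg)
  with assms(1) have "(1 - x $ i) * (\<Sum>j\<in>UNIV. B $ i $ j * x $ j) \<le> 0"
    by (simp add: mult_nonpos_nonneg)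
  moreover have "0 < d $ i * x $ i" using d_pos[of i] assms(1) by simp
  ultimately show ?thesis unfolding sis_field_nth by linarith
qed

lemma field_nth_ge_on_Xi:
  assumes "x \<in> Xi"
  shows "- d $ i * x $ i \<le> sis_field d B x $ i"
  using assms B_nonneg unfolding sis_field_nth Xi_def by (simp add: sum_nonneg)

lemma field_nth_ge_at_zero:
  assumes "x \<in> Xi" "x $ i = 0"
  shows "B $ i $ j * x $ j \<le> sis_field d B x $ i"
proof -
  have "B $ i $ j * x $ j \<le> (\<Sum>k\<in>UNIV. B $ i $ k * x $ k)"
    using assms(1) B_nonneg unfolding Xi_def by (intro member_le_sum) auto
  with assms(2) show ?thesis unfolding sis_field_nth by simp
qed

lemma row_sum_lower_bound:
  assumes "0 \<le> c" "\<forall>j. - c \<le> x $ j" "(\<Sum>j\<in>UNIV. B $ i $ j) \<le> R"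
  shows "- c * R \<le> (\<Sum>j\<in>UNIV. B $ i $ j * x $ j)"
proof -
  have "- c * R \<le> - c * (\<Sum>j\<in>UNIV. B $ i $ j)" using assms(1,3) by (simp add: mult_left_mono)
  also have "\<dots> \<le> (\<Sum>j\<in>UNIV. B $ i $ j * x $ j)"
    unfolding sum_distrib_left using assms(2) B_nonneg
    by (intro sum_mono) (metis mult.commute mult_left_mono)
  finally show ?thesis .
qed

lemma field_nth_gt_below_cube:
  assumes "0 < c" "c \<le> 1" "\<forall>j. - c \<le> x $ j" "x $ i = - c" "(\<Sum>j\<in>UNIV. B $ i $ j) \<le> R"
  shows "- ((2 * R + 1) * c) < sis_field d B x $ i"
proof -
  have "- c * R \<le> (\<Sum>j\<in>UNIV. B $ i $ j * x $ j)"
    using assms(1,3,5) by (intro row_sum_lower_bound) auto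
  then have "(1 + c) * (- c * R) \<le> (1 + c) * (\<Sum>j\<in>UNIV. B $ i $ j * x $ j)"
    using assms(1) by (intro mult_left_mono) auto
  moreover have "0 \<le> R" using assms(5) B_nonneg by (smt (verit) sum_nonneg)
  then have "(1 + c) * (c * R) \<le> 2 * (c * R)" using assms(1,2) by (intro mult_right_mono) auto
  moreover have "0 < d $ i * c" using d_pos[of i] assms(1) by simp
  ultimately show ?thesis unfolding sis_field_nth assms(4) using assms(1) by (simp add: algebra_simps)
qed

lemma field_nth_lt_above_cube:
  assumes "0 < c" "c \<le> 1" "\<forall>j. - c \<le> x $ j" "x $ i = 1 + c" "(\<Sum>j\<in>UNIV. B $ i $ j) \<le> R"
  shows "sis_field d B x $ i < (2 * R + 1) * c"
proof -
  have "- c * R \<le> (\<Sum>j\<in>UNIV. B $ i $ j * x $ j)"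
    using assms(1,3,5) by (intro row_sum_lower_bound) auto
  then have "c * (- c * R) \<le> c * (\<Sum>j\<in>UNIV. B $ i $ j * x $ j)"
    using assms(1) by (intro mult_left_mono) auto
  moreover have "0 \<le> R" using assms(5) B_nonneg by (smt (verit) sum_nonneg)
  then have "c * (c * R) \<le> c * R" "0 \<le> c * R" using assms(1,2) by (simp_all add: mult_left_le_one_le)
  moreover have "0 < d $ i * (1 + c)" using d_pos[of i] assms(1) by simp
  ultimately show ?thesis unfolding sis_field_nth assms(4) using assms(1) by (simp add: algebra_simps)
qed

\<comment> \<open>On the faces of the cube the field is only weakly inward, so the cube is approached through
  the boxes [-c(s), 1 + c(s)], whose faces recede fast enough for the field to point strictly
  inward, and then c \<rightarrow> 0.\<close>
lemma Xi_invariant: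
  assumes sol: "sis_solution d B x" and x0: "x 0 \<in> Xi" and "0 \<le> t"
  shows "x t \<in> Xi"
proof -
  define R where "R = (\<Sum>i\<in>UNIV. \<Sum>j\<in>UNIV. B $ i $ j)"
  define K where "K = 2 * R + 1"
  have R: "(\<Sum>j\<in>UNIV. B $ i $ j) \<le> R" for i
    unfolding R_def using B_nonneg by (intro member_le_sum) (auto intro: sum_nonneg)
  have "0 \<le> R" unfolding R_def using B_nonneg by (intro sum_nonneg) auto
  have near: "- \<delta> < x t $ i \<and> x t $ i < 1 + \<delta>" if "0 < \<delta>" "\<delta> \<le> 1" for \<delta> i
  proof -
    define c where "c s = \<delta> * exp (K * (s - t))" for s
    have c_pos: "0 < c s" for s using \<open>0 < \<delta>\<close> by (simp add: c_def)
    have c_le: "c s \<le> 1" if "s \<le> t" for s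
    proof -
      have "exp (K * (s - t)) \<le> 1" using that \<open>0 \<le> R\<close> by (simp add: K_def mult_nonneg_nonpos)
      with \<open>0 < \<delta>\<close> \<open>\<delta> \<le> 1\<close> show ?thesis unfolding c_def by (simp add: mult_le_one)
    qed
    have "- c t < x t $ i \<and> x t $ i < 1 + c t"
    proof (rule sis_solution_stays_in_moving_box[OF sol order_refl \<open>0 \<le> t\<close>,
          where l = "\<lambda>i s. - c s" and l' = "\<lambda>i s. - (K * c s)"
            and u = "\<lambda>i s. 1 + c s" and u' = "\<lambda>i s. K * c s"])
      show "((\<lambda>s. - c s) has_real_derivative - (K * c s)) (at s)"
        "((\<lambda>s. 1 + c s) has_real_derivative K * c s) (at s)" for s
        unfolding c_def by (auto intro!: derivative_eq_intros)
      show "- c 0 < x 0 $ j \<and> x 0 $ j < 1 + c 0" for j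
      proof -
        have "0 \<le> x 0 $ j" "x 0 $ j \<le> 1" using x0 by (simp_all add: Xi_def)
        with c_pos[of 0] show ?thesis by linarith
      qed
      show "- (K * c s) < sis_field d B (x s) $ j"
        if "0 < s" "s \<le> t" "\<forall>k. - c s \<le> x s $ k \<and> x s $ k \<le> 1 + c s" "x s $ j = - c s" for j s
        unfolding K_def using field_nth_gt_below_cube[OF c_pos c_le[OF that(2)] _ that(4) R] that(3) by blast
      show "sis_field d B (x s) $ j < K * c s"
        if "0 < s" "s \<le> t" "\<forall>k. - c s \<le> x s $ k \<and> x s $ k \<le> 1 + c s" "x s $ j = 1 + c s" for j s
        unfolding K_def using field_nth_lt_above_cube[OF c_pos c_le[OF that(2)] _ that(4) R] that(3) by blast
    qed
    then show ?thesis by (simp add: c_def)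
  qed
  have "0 \<le> x t $ i \<and> x t $ i \<le> 1" for i
  proof
    show "0 \<le> x t $ i"
      by (rule field_le_epsilon) (use near[of "min _ 1" i] in force)
    show "x t $ i \<le> 1"
      by (rule field_le_epsilon) (use near[of "min _ 1" i] in force)
  qed
  then show ?thesis by (simp add: Xi_def)
qed

lemma positive_persists:
  assumes sol: "sis_solution d B x" and x0: "x 0 \<in> Xi"
    and "0 \<le> t" "t \<le> t'" and "0 < x t $ i"
  shows "0 < x t' $ i"
proof -
  define w where "w s = exp (d $ i * s) * x s $ i" for s
  have "w t \<le> w t'"
  proof (rule DERIV_nonneg_imp_increasing_open[OF \<open>t \<le> t'\<close>])
    fix s assume s: "t < s" "s < t'"
    have "((\<lambda>s. x s $ i) has_real_derivative sis_field d B (x s) $ i) (at s)"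
      using sis_solution_has_vector_derivative[OF sol] s \<open>0 \<le> t\<close>
      by (intro has_vector_derivative_vec_nth) simp
    then have "(w has_real_derivative
        exp (d $ i * s) * (d $ i * x s $ i + sis_field d B (x s) $ i)) (at s)"
      unfolding w_def by (auto intro!: derivative_eq_intros simp: algebra_simps)
    moreover have "0 \<le> d $ i * x s $ i + sis_field d B (x s) $ i"
      using field_nth_ge_on_Xi[OF Xi_invariant[OF sol x0], of s i] s \<open>0 \<le> t\<close> by simp
    ultimately show "\<exists>y. (w has_real_derivative y) (at s) \<and> 0 \<le> y" by auto
  next
    show "continuous_on {t..t'} w"
      unfolding w_def using \<open>0 \<le> t\<close>
      by (intro continuous_intros continuous_on_subset[OF sis_solution_continuous_on[OF sol]]) auto
  qed
  moreover have "0 < w t" using \<open>0 < x t $ i\<close> by (simp add: w_def)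
  ultimately have "0 < w t'" by linarith
  then show ?thesis by (simp add: w_def zero_less_mult_iff)
qed

lemma field_pos_at_some_zero:
  assumes irr: "irreducible_mat B" and "x \<in> Xi" "0 < x $ i" "\<not> 0 < x $ j"
  obtains b where "x $ b = 0" "0 < sis_field d B x $ b"
proof -
  obtain a b where ab: "0 < x $ a" "\<not> 0 < x $ b" "B $ b $ a \<noteq> 0"
    using irreducible_mat_edge_out[OF irr, of i "{k. 0 < x $ k}" j] assms(3,4) by auto
  have "0 \<le> x $ b" using \<open>x \<in> Xi\<close> by (simp add: Xi_def)
  with ab(2) have "x $ b = 0" by simp
  moreover have "0 < B $ b $ a * x $ a" using ab B_nonneg[of b a] by (simp add: less_le)
  then have "0 < sis_field d B x $ b"
    using field_nth_ge_at_zero[OF \<open>x \<in> Xi\<close> \<open>x $ b = 0\<close>, of a] by linarith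
  ultimately show ?thesis using that by blast
qed

lemma positive_support_grows:
  assumes irr: "irreducible_mat B" and sol: "sis_solution d B x" and x0: "x 0 \<in> Xi"
    and "0 < t" "0 < x t $ i" "\<not> 0 < x t $ j"
  shows "\<exists>t'>t. card {k. 0 < x t $ k} < card {k. 0 < x t' $ k}"
proof -
  have "x t \<in> Xi" using Xi_invariant[OF sol x0] \<open>0 < t\<close> by simp
  then obtain b where b: "x t $ b = 0" "0 < sis_field d B (x t) $ b"
    using field_pos_at_some_zero[OF irr _ \<open>0 < x t $ i\<close> \<open>\<not> 0 < x t $ j\<close>] by blast
  have "((\<lambda>s. x s $ b) has_real_derivative sis_field d B (x t) $ b) (at t)"
    using sis_solution_has_vector_derivative[OF sol \<open>0 < t\<close>] by (rule has_vector_derivative_vec_nth)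
  from DERIV_pos_inc_right[OF this b(2)] obtain h where
    "0 < h" and up: "\<And>r. 0 < r \<Longrightarrow> r < h \<Longrightarrow> x t $ b < x (t + r) $ b" by blast
  define t' where "t' = t + h / 2"
  have "t < t'" using \<open>0 < h\<close> by (simp add: t'_def)
  have "0 < x t' $ b" using up[of "h / 2"] b(1) \<open>0 < h\<close> by (simp add: t'_def)
  moreover have "0 < x t' $ k" if "0 < x t $ k" for k
    using positive_persists[OF sol x0 _ _ that] \<open>0 < t\<close> \<open>t < t'\<close> by simp
  ultimately have "insert b {k. 0 < x t $ k} \<subseteq> {k. 0 < x t' $ k}" by blast
  then have "card (insert b {k. 0 < x t $ k}) \<le> card {k. 0 < x t' $ k}" by (intro card_mono) auto
  then show ?thesis using b(1) \<open>t < t'\<close> by auto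
qed

lemma eventually_positive:
  assumes irr: "irreducible_mat B" and sol: "sis_solution d B x" and x0: "x 0 \<in> Xi" "x 0 \<noteq> 0"
  shows "\<exists>t>0. \<forall>i. 0 < x t $ i"
proof -
  obtain i0 where "x 0 $ i0 \<noteq> 0" using x0(2) by (auto simp: vec_eq_iff)
  then have "0 < x 0 $ i0" using x0(1) by (auto simp: Xi_def less_le)
  then have i0: "0 < x t $ i0" if "0 \<le> t" for t
    using positive_persists[OF sol x0(1) order_refl that] by simp
  have "\<exists>t\<ge>1. m \<le> card {k. 0 < x t $ k}" if "m \<le> CARD('n)" for m
    using that
  proof (induction m)
    case 0
    then show ?case by auto
  next
    case (Suc m)
    then obtain t where t: "1 \<le> t" "m \<le> card {k. 0 < x t $ k}" by auto
    show ?case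
    proof (cases "\<forall>j. 0 < x t $ j")
      case True
      with Suc.prems t(1) show ?thesis by (intro exI[of _ t]) auto
    next
      case False
      then obtain j where "\<not> 0 < x t $ j" by blast
      moreover have "0 < t" "0 < x t $ i0" using t(1) i0[of t] by simp_all
      ultimately obtain t' where "t < t'" "card {k. 0 < x t $ k} < card {k. 0 < x t' $ k}"
        using positive_support_grows[OF irr sol x0(1)] by blast
      with t show ?thesis by (intro exI[of _ t']) auto
    qed
  qed
  then obtain t where "1 \<le> t" "CARD('n) \<le> card {k. 0 < x t $ k}" by blast
  then have "{k. 0 < x t $ k} = UNIV" by (intro card_seteq) auto
  with \<open>1 \<le> t\<close> show ?thesis by (intro exI[of _ t]) auto
qed

lemma equilibrium_in_open_cube:
  assumes irr: "irreducible_mat B" and x: "x \<in> Xi" "x \<noteq> 0" "sis_field d B x = 0"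
  shows "0 < x $ i \<and> x $ i < 1"
proof
  have "\<forall>j. 0 \<le> x $ j" using x(1) by (simp add: Xi_def)
  then show "x $ i < 1"
    using field_nth_neg_at_upper[of x i] x(3) by (metis not_less zero_index less_irrefl)
  obtain i0 where "x $ i0 \<noteq> 0" using x(2) by (auto simp: vec_eq_iff)
  then have "0 < x $ i0" using x(1) by (auto simp: Xi_def less_le)
  show "0 < x $ i"
  proof (rule ccontr)
    assume "\<not> 0 < x $ i"
    from field_pos_at_some_zero[OF irr x(1) \<open>0 < x $ i0\<close> this] x(3) show False by simp
  qed
qed

end

lemma Xi_eq_cbox: "Xi = cbox 0 1"
  by (auto simp: Xi_def mem_box_cart)

lemma M_eps_eq_cbox: "M_eps \<epsilon> y = cbox (\<epsilon> *\<^sub>R y) 1"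
  by (auto simp: M_eps_def mem_box_cart)

lemma interior_M_eps: "interior (M_eps \<epsilon> y) = {x. \<forall>i. \<epsilon> * y $ i < x $ i \<and> x $ i < 1}"
  by (auto simp: M_eps_eq_cbox interior_cbox mem_box_cart)

locale sis_eigen = sis +
  fixes y :: "real^'n" and \<phi> :: real
  assumes phi_pos: "0 < \<phi>"
    and y_pos: "\<And>i. 0 < y $ i"
    and y_le_1: "\<And>i. y $ i \<le> 1"
    and eigen_row: "\<And>i. (\<Sum>j\<in>UNIV. B $ i $ j * y $ j) = (\<phi> + d $ i) * y $ i"
begin

definition eps_bound :: real where
  "eps_bound = \<phi> / (2 * (\<phi> + (\<Sum>j\<in>UNIV. d $ j)))"

lemma eps_bound_pos: "0 < eps_bound"
proof -
  have "0 \<le> (\<Sum>j\<in>UNIV. d $ j)" using d_pos by (simp add: sum_nonneg less_imp_le)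
  with phi_pos show ?thesis unfolding eps_bound_def by (simp add: add_pos_nonneg)
qed

lemma field_nth_ge_on_lower_face:
  assumes c: "0 < c" "c < eps_bound" and x: "x $ i = c * y $ i" "\<forall>j. c * y $ j \<le> x $ j"
  shows "c * y $ i * \<phi> / 2 \<le> sis_field d B x $ i"
proof -
  define p where "p = c * y $ i"
  define D where "D = (\<Sum>j\<in>UNIV. d $ j)"
  define S where "S = (\<Sum>j\<in>UNIV. B $ i $ j * x $ j)"
  have "0 < p" using c(1) y_pos[of i] by (simp add: p_def)
  have "p \<le> c" using c(1) y_le_1[of i] by (simp add: p_def mult_left_le)
  have "d $ i \<le> D" unfolding D_def using d_pos by (intro member_le_sum) (auto intro: less_imp_le)
  then have "p * (\<phi> + d $ i) \<le> c * (\<phi> + D)"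
    using \<open>p \<le> c\<close> \<open>0 < p\<close> c(1) phi_pos d_pos[of i] by (intro mult_mono) auto
  also have "c * (\<phi> + D) < \<phi> / 2"
  proof -
    have "0 < 2 * (\<phi> + D)" using phi_pos \<open>d $ i \<le> D\<close> d_pos[of i] by simp
    with c(2) have "c * (2 * (\<phi> + D)) < \<phi>" by (simp add: eps_bound_def D_def pos_less_divide_eq)
    then show ?thesis by (simp add: algebra_simps)
  qed
  finally have small: "p * (\<phi> + d $ i) < \<phi> / 2" .
  moreover have "p * \<phi> \<le> p * (\<phi> + d $ i)" using \<open>0 < p\<close> d_pos[of i] by simp
  ultimately have "p * \<phi> < 1 * \<phi>" using phi_pos by linarith
  then have "p \<le> 1" using mult_right_less_imp_less[of p \<phi> 1] phi_pos by simp
  have "(\<Sum>j\<in>UNIV. B $ i $ j * (c * y $ j)) \<le> S"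
    unfolding S_def using x(2) B_nonneg by (intro sum_mono mult_left_mono) auto
  moreover have "(\<Sum>j\<in>UNIV. B $ i $ j * (c * y $ j)) = c * (\<Sum>j\<in>UNIV. B $ i $ j * y $ j)"
    by (simp add: sum_distrib_left mult.left_commute)
  then have "(\<Sum>j\<in>UNIV. B $ i $ j * (c * y $ j)) = p * (\<phi> + d $ i)"
    using eigen_row[of i] by (simp add: p_def)
  ultimately have "(1 - p) * (p * (\<phi> + d $ i)) \<le> (1 - p) * S"
    using \<open>p \<le> 1\<close> by (intro mult_left_mono) auto
  moreover have "p * (p * (\<phi> + d $ i)) \<le> p * (\<phi> / 2)"
    using small \<open>0 < p\<close> by (intro mult_left_mono) auto
  moreover have "(1 - p) * (p * (\<phi> + d $ i)) = p * \<phi> + d $ i * p - p * (p * (\<phi> + d $ i))"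
    by (simp add: algebra_simps)
  moreover have "sis_field d B x $ i = - d $ i * p + (1 - p) * S"
    unfolding sis_field_nth x(1) p_def S_def ..
  ultimately show ?thesis unfolding p_def[symmetric] by linarith
qed

lemma field_nth_pos_on_P_face:
  assumes "0 < \<epsilon>" "\<epsilon> < eps_bound" "x \<in> P_face \<epsilon> y i"
  shows "0 < sis_field d B x $ i"
proof -
  have x: "x $ i = \<epsilon> * y $ i" "\<forall>j. \<epsilon> * y $ j \<le> x $ j"
    using assms(3) unfolding P_face_def by (auto, metis order_refl)
  have "0 < \<epsilon> * y $ i * \<phi> / 2" using assms(1) y_pos[of i] phi_pos by simp
  also have "\<dots> \<le> sis_field d B x $ i" by (rule field_nth_ge_on_lower_face[OF assms(1,2) x])
  finally show ?thesis .
qed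

lemma field_nth_neg_on_Q_face:
  assumes "0 < \<epsilon>" "x \<in> Q_face \<epsilon> y i"
  shows "sis_field d B x $ i < 0"
proof (rule field_nth_neg_at_upper)
  show "\<forall>j. 0 \<le> x $ j"
  proof
    fix j
    have "0 < \<epsilon> * y $ j" using assms(1) y_pos[of j] by simp
    with assms(2) show "0 \<le> x $ j" unfolding Q_face_def by (cases "j = i") auto
  qed
qed (use assms(2) in \<open>simp add: Q_face_def\<close>)

lemma box_invariant:
  assumes c: "0 < c" "c < eps_bound" and "1 \<le> u" and sol: "sis_solution d B x"
    and x0: "\<forall>i. c * y $ i < x 0 $ i \<and> x 0 $ i < u" and "0 \<le> t"
  shows "c * y $ i < x t $ i \<and> x t $ i < u"
proof (rule sis_solution_stays_in_moving_box[OF sol order_refl \<open>0 \<le> t\<close>,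
      where l = "\<lambda>i s. c * y $ i" and l' = "\<lambda>i s. 0" and u = "\<lambda>i s. u" and u' = "\<lambda>i s. 0"])
  show "0 < sis_field d B (x s) $ j"
    if "0 < s" "s \<le> t" "\<forall>k. c * y $ k \<le> x s $ k \<and> x s $ k \<le> u" "x s $ j = c * y $ j" for j s
  proof -
    have "0 < c * y $ j * \<phi> / 2" using c(1) y_pos[of j] phi_pos by simp
    also have "\<dots> \<le> sis_field d B (x s) $ j"
      using that by (intro field_nth_ge_on_lower_face[OF c]) simp_all
    finally show ?thesis .
  qed
  show "sis_field d B (x s) $ j < 0"
    if "0 < s" "s \<le> t" "\<forall>k. c * y $ k \<le> x s $ k \<and> x s $ k \<le> u" "x s $ j = u" for j s
  proof (rule field_nth_neg_at_upper)
    show "\<forall>k. 0 \<le> x s $ k"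
    proof
      fix k
      have "0 < c * y $ k" using c(1) y_pos[of k] by simp
      with that(3) show "0 \<le> x s $ k" by (meson less_imp_le order_trans)
    qed
  qed (use that(4) \<open>1 \<le> u\<close> in simp)
  show "c * y $ j < x 0 $ j \<and> x 0 $ j < u" for j using x0 by blast
qed (rule DERIV_const)+

lemma interior_M_eps_invariant:
  assumes "0 < \<epsilon>" "\<epsilon> < eps_bound"
  shows "pos_invariant d B (interior (M_eps \<epsilon> y))"
  unfolding pos_invariant_def interior_M_eps
proof (intro allI impI CollectI)
  fix x and t :: real and i
  assume "sis_solution d B x" "x 0 \<in> {x. \<forall>i. \<epsilon> * y $ i < x $ i \<and> x $ i < 1}" "0 \<le> t"
  then show "\<epsilon> * y $ i < x t $ i \<and> x t $ i < 1"
    using box_invariant[OF assms order_refl] by blast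
qed

lemma M_eps_invariant:
  assumes \<epsilon>: "0 < \<epsilon>" "\<epsilon> < eps_bound"
  shows "pos_invariant d B (M_eps \<epsilon> y)"
  unfolding pos_invariant_def
proof (intro allI impI)
  fix x and t :: real
  assume sol: "sis_solution d B x" and x0: "x 0 \<in> M_eps \<epsilon> y" and "0 \<le> t"
  \<comment> \<open>the closed box is the limit of the strictly invariant boxes [c y, 1 + \<delta>] with c < \<epsilon>\<close>
  have strict: "c * y $ i < x t $ i \<and> x t $ i < 1 + \<delta>" if "0 < c" "c < \<epsilon>" "0 < \<delta>" for c \<delta> i
  proof (rule box_invariant[OF \<open>0 < c\<close> _ _ sol _ \<open>0 \<le> t\<close>])
    show "\<forall>i. c * y $ i < x 0 $ i \<and> x 0 $ i < 1 + \<delta>"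
    proof
      fix i
      have "\<epsilon> * y $ i \<le> x 0 $ i" "x 0 $ i \<le> 1" using x0 by (simp_all add: M_eps_def)
      with mult_strict_right_mono[OF \<open>c < \<epsilon>\<close> y_pos[of i]] \<open>0 < \<delta>\<close>
      show "c * y $ i < x 0 $ i \<and> x 0 $ i < 1 + \<delta>" by linarith
    qed
  qed (use that \<epsilon> in auto)
  have "\<epsilon> * y $ i \<le> x t $ i \<and> x t $ i \<le> 1" for i
  proof
    have "\<epsilon> \<le> x t $ i / y $ i"
    proof (rule dense_le_bounded[OF \<open>0 < \<epsilon>\<close>])
      fix c assume "0 < c" "c < \<epsilon>"
      with strict[of c 1 i] y_pos[of i] show "c \<le> x t $ i / y $ i" by (simp add: pos_le_divide_eq)
    qed
    then show "\<epsilon> * y $ i \<le> x t $ i" using y_pos[of i] by (simp add: pos_le_divide_eq)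
    show "x t $ i \<le> 1"
      by (rule field_le_epsilon) (use strict[of "\<epsilon> / 2" _ i] \<epsilon>(1) in force)
  qed
  then show "x t \<in> M_eps \<epsilon> y" by (simp add: M_eps_def)
qed

\<comment> \<open>The lower face c(s) y rises at the rate \<phi>/4, below the rate \<phi>/2 guaranteed on it, until it
  reaches \<epsilon> y; the upper face 2 is never touched since solutions stay in the cube.\<close>
lemma reaches_M_eps:
  assumes irr: "irreducible_mat B" and sol: "sis_solution d B x" and x0: "x 0 \<in> Xi" "x 0 \<noteq> 0"
    and \<epsilon>: "0 < \<epsilon>" "\<epsilon> < eps_bound"
  shows "\<exists>\<kappa>>0. x \<kappa> \<in> M_eps \<epsilon> y"
proof -
  have le_1: "x s $ j \<le> 1" if "0 \<le> s" for s j
    using Xi_invariant[OF sol x0(1) that] by (simp add: Xi_def)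
  obtain t1 where "0 < t1" and pos: "\<And>i. 0 < x t1 $ i"
    using eventually_positive[OF irr sol x0] by blast
  define v where "v = Min (range (\<lambda>i. x t1 $ i / y $ i))"
  have "0 < v" unfolding v_def using pos y_pos by (subst Min_gr_iff) auto
  have v_le: "v * y $ i \<le> x t1 $ i" for i
  proof -
    have "v \<le> x t1 $ i / y $ i" unfolding v_def by (rule Min_le) auto
    with y_pos[of i] show ?thesis by (simp add: pos_le_divide_eq)
  qed
  define a where "a = min (\<epsilon> / 2) (v / 2)"
  have a: "0 < a" "a < \<epsilon>" "a < v" using \<epsilon>(1) \<open>0 < v\<close> by (auto simp: a_def)
  define \<rho> where "\<rho> = \<phi> / 4"
  define T where "T = t1 + ln (\<epsilon> / a) / \<rho>"
  define c where "c s = a * exp (\<rho> * (s - t1))" for s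
  have "0 < \<rho>" using phi_pos by (simp add: \<rho>_def)
  then have "t1 < T" using a by (simp add: T_def)
  have c_pos: "0 < c s" for s using a(1) by (simp add: c_def)
  have c_T: "c T = \<epsilon>" using a \<epsilon>(1) \<open>0 < \<rho>\<close> by (simp add: c_def T_def)
  have c_le: "c s \<le> \<epsilon>" if "s \<le> T" for s
  proof -
    have "c s \<le> c T" unfolding c_def using that \<open>0 < \<rho>\<close> a(1) by simp
    with c_T show ?thesis by simp
  qed
  have "c T * y $ i < x T $ i \<and> x T $ i < 2" for i
  proof (rule sis_solution_stays_in_moving_box[OF sol, of t1 T,
        OF less_imp_le[OF \<open>0 < t1\<close>] less_imp_le[OF \<open>t1 < T\<close>],
        where l = "\<lambda>i s. c s * y $ i" and l' = "\<lambda>i s. \<rho> * c s * y $ i"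
          and u = "\<lambda>i s. 2" and u' = "\<lambda>i s. 0"])
    show "((\<lambda>s. c s * y $ j) has_real_derivative \<rho> * c s * y $ j) (at s)" for j s
      unfolding c_def by (auto intro!: derivative_eq_intros)
    show "c t1 * y $ j < x t1 $ j \<and> x t1 $ j < 2" for j
    proof
      have "a * y $ j < v * y $ j" using a(3) y_pos[of j] by simp
      with v_le[of j] show "c t1 * y $ j < x t1 $ j" by (simp add: c_def)
      show "x t1 $ j < 2" using le_1[of t1 j] \<open>0 < t1\<close> by simp
    qed
    show "\<rho> * c s * y $ j < sis_field d B (x s) $ j"
      if "t1 < s" "s \<le> T" "\<forall>k. c s * y $ k \<le> x s $ k \<and> x s $ k \<le> 2" "x s $ j = c s * y $ j" for j s
    proof -
      have "\<rho> * c s * y $ j < c s * y $ j * \<phi> / 2"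
        using c_pos[of s] y_pos[of j] phi_pos by (simp add: \<rho>_def field_simps)
      also have "\<dots> \<le> sis_field d B (x s) $ j"
        using c_le[OF that(2)] \<epsilon>(2) that(3,4) by (intro field_nth_ge_on_lower_face c_pos) auto
      finally show ?thesis .
    qed
    show "sis_field d B (x s) $ j < 0" if "t1 < s" "x s $ j = 2" for j s
      using le_1[of s j] that \<open>0 < t1\<close> by simp
  qed simp
  then have "x T \<in> M_eps \<epsilon> y"
    using c_T le_1[of T] \<open>0 < t1\<close> \<open>t1 < T\<close> by (auto simp: M_eps_def less_imp_le)
  with \<open>0 < t1\<close> \<open>t1 < T\<close> show ?thesis by (intro exI[of _ T]) auto
qed

lemma equilibrium_in_interior_M_eps:
  assumes irr: "irreducible_mat B" and x: "x \<in> Xi" "x \<noteq> 0" "sis_field d B x = 0"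
    and \<epsilon>: "0 < \<epsilon>" "\<epsilon> < eps_bound"
  shows "x \<in> interior (M_eps \<epsilon> y)"
proof -
  have cube: "0 < x $ j \<and> x $ j < 1" for j using equilibrium_in_open_cube[OF irr x] .
  define c where "c = Min (range (\<lambda>j. x $ j / y $ j))"
  have "c \<in> range (\<lambda>j. x $ j / y $ j)" unfolding c_def by (rule Min_in) auto
  then obtain i where ci: "c = x $ i / y $ i" by blast
  have c_le: "c * y $ j \<le> x $ j" for j
  proof -
    have "c \<le> x $ j / y $ j" unfolding c_def by (rule Min_le) auto
    with y_pos[of j] show ?thesis by (simp add: pos_le_divide_eq)
  qed
  have "0 < c" using ci cube[of i] y_pos[of i] by simp
  \<comment> \<open>the coordinate realising the minimum ratio sits on a lower face, where the field is positive\<close>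
  have "\<epsilon> < c"
  proof (rule ccontr)
    assume "\<not> \<epsilon> < c"
    then have "c * y $ i * \<phi> / 2 \<le> sis_field d B x $ i"
      using \<epsilon> ci y_pos[of i] c_le \<open>0 < c\<close> by (intro field_nth_ge_on_lower_face) auto
    moreover have "0 < c * y $ i * \<phi> / 2" using \<open>0 < c\<close> y_pos[of i] phi_pos by simp
    ultimately show False using x(3) by simp
  qed
  then have "\<epsilon> * y $ j < x $ j" for j
    using c_le[of j] y_pos[of j] by (smt (verit) mult_strict_right_mono)
  with cube show ?thesis unfolding interior_M_eps by auto
qed

end

theorem lemma4:
  fixes d :: "real^'n" and B :: "real^'n^'n" and y :: "real^'n" and \<phi> :: real
  assumes n2: "CARD('n) \<ge> 2"
    and d_pos: "\<forall>i. d $ i > 0"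
    and B_nonneg: "\<forall>i j. B $ i $ j \<ge> 0"
    and B_irr: "irreducible_mat B"
    and phi_def: "\<phi> = spectral_abscissa (B - diag_mat d)"
    and phi_pos: "\<phi> > 0"
    and y_pos: "\<forall>i. y $ i > 0"
    and y_eig: "(B - diag_mat d) *v y = \<phi> *\<^sub>R y"
    and y_max: "(MAX i. y $ i) = 1"
  shows "\<exists>\<epsilon>0>0. \<forall>\<epsilon>. 0 < \<epsilon> \<and> \<epsilon> < \<epsilon>0 \<and> \<epsilon> < 1 \<longrightarrow>
           (pos_invariant d B (M_eps \<epsilon> y) \<and> pos_invariant d B (interior (M_eps \<epsilon> y)))
         \<and> (\<forall>i. (\<forall>x\<in>P_face \<epsilon> y i. - (sis_field d B x $ i) < 0)
                \<and> (\<forall>x\<in>Q_face \<epsilon> y i. sis_field d B x $ i < 0))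
         \<and> (\<forall>x. sis_solution d B x \<longrightarrow> x 0 \<in> frontier Xi - {0} \<longrightarrow>
                (\<exists>\<kappa>>0. x \<kappa> \<in> M_eps \<epsilon> y))
         \<and> (\<forall>x\<in>Xi - {0}. sis_field d B x = 0 \<longrightarrow> x \<in> interior (M_eps \<epsilon> y))"
proof -
  have "y $ i \<le> 1" for i using y_max Max_ge[of "range (($) y)" "y $ i"] by simp
  then interpret sis_eigen d B y \<phi>
    using d_pos B_nonneg phi_pos y_pos eigenvector_row_sum[OF y_eig] by unfold_locales auto
  have "frontier Xi \<subseteq> (Xi :: (real^'n) set)"
    unfolding Xi_eq_cbox by (rule frontier_subset_closed[OF closed_cbox])
  show ?thesis
  proof (rule exI[of _ eps_bound], intro conjI allI impI ballI eps_bound_pos)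
    fix \<epsilon> assume "0 < \<epsilon> \<and> \<epsilon> < eps_bound \<and> \<epsilon> < 1"
    then have \<epsilon>: "0 < \<epsilon>" "\<epsilon> < eps_bound" by simp_all
    show "pos_invariant d B (M_eps \<epsilon> y)" using M_eps_invariant[OF \<epsilon>] .
    show "pos_invariant d B (interior (M_eps \<epsilon> y))" using interior_M_eps_invariant[OF \<epsilon>] .
    show "- (sis_field d B x $ i) < 0" if "x \<in> P_face \<epsilon> y i" for x i
      using field_nth_pos_on_P_face[OF \<epsilon> that] by simp
    show "sis_field d B x $ i < 0" if "x \<in> Q_face \<epsilon> y i" for x i
      using field_nth_neg_on_Q_face[OF \<epsilon>(1) that] .
    show "\<exists>\<kappa>>0. x \<kappa> \<in> M_eps \<epsilon> y" if "sis_solution d B x" "x 0 \<in> frontier Xi - {0}" for x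
      using reaches_M_eps[OF B_irr that(1) _ _ \<epsilon>] that(2) \<open>frontier Xi \<subseteq> Xi\<close> by blast
    show "x \<in> interior (M_eps \<epsilon> y)" if "x \<in> Xi - {0}" "sis_field d B x = 0" for x
      using equilibrium_in_interior_M_eps[OF B_irr _ _ that(2) \<epsilon>] that(1) by blast
  qed
qed

end
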